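(* Let $n\ge 0$ be an integer and for $k\in\mathbb{Z}_+$ let $v_k(t)=c_k\,e^{-\frac{t^{2n+2}}{2n+2}}L^{(-\frac{1}{2n+2})}_{k}\!\left(\frac{t^{2n+2}}{n+1}\right)$ with $c_k>0$ chosen so that $\|t^nv_k\|_{L^2(\mathbb{R})}=1$. Let $0<\delta\le\frac12$, $B=\frac{1-\delta^{2n+1}}{2n+2}$, and let $C_0>0$ be a constant independent of $k$ such that $|v_k(t)|\le C_0^{k+1}e^{-Bt^{2n+2}}$ for all $k$ and $t$. Then for every $B'$ with $0<B'<B$ there is a constant $C_1>0$ independent of $k$, with $C_1=\mathscr{O}((B-B')^{-2})$, such that $$|v_k'(t)|\le C_1C_0^{\,k}e^{-B't^{2n+2}}$$ for all $k\in\mathbb{Z}_+$ and $t\in\mathbb{R}$.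
   Context: $L^{(a)}_k$ denotes the generalized Laguerre polynomial of degree $k$ and parameter $a$. $v_k$ solves $-v_k''+t^{2(2n+1)}v_k=E_kt^{2n}v_k$ with $E_k=4k(n+1)+2n+1$. *)

theory Defs
  imports "HOL-Analysis.Analysis"
begin

definition gen_laguerre :: "real \<Rightarrow> nat \<Rightarrow> real \<Rightarrow> real" where
  "gen_laguerre a k x =
     (\<Sum>i\<le>k. (-1) ^ i * ((real k + a) gchoose (k - i)) * x ^ i / fact i)"

definition v_unnorm :: "nat \<Rightarrow> nat \<Rightarrow> real \<Rightarrow> real" where
  "v_unnorm n k t =
     exp (- (t ^ (2*n+2)) / (2 * real n + 2)) *
     gen_laguerre (- 1 / (2 * real n + 2)) k (t ^ (2*n+2) / (real n + 1))"

end

theory Submission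
  imports Defs
begin

(* With X = t^(2n+2)/(n+1) and alpha = -1/(2n+2) we have v_k = c_k exp(-X/2) L_k^(alpha)(X).
   Since (L_k^(alpha))' = -L_(k-1)^(alpha+1) = -(L_0^(alpha) + ... + L_(k-1)^(alpha)), the derivative is
     v_k' = -t^(2n+1) (v_k + 2 sum_(j<k) (c_k/c_j) v_j).
   Expanding L_k^(alpha) in powers of X and integrating term by term against the moments
   of t^(2n) exp(-rho t^(2n+2)), which integration by parts expresses through Pochhammer
   symbols, gives c_k^(-2) = W (alpha+1)_k/k!, hence c_k <= (k-j+1) c_j; the same computation
   gives the integral of t^(2n) v_k exp(t^(2n+2)/(6n+6)) as c_k W' (alpha+1)_k/k! (-2)^k.
   Comparing this exponential growth with the assumed bound on v_k forces C_0 > 1, so that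
   sum_(j<k) (k-j+1) C_0^(j+1) = O(C_0^(k+1)).  Finally the polynomial factor is absorbed by
   |t|^(2n+1) exp(-(B-B') t^(2n+2)) <= (B-B')^(-2). *)

section \<open>Generalized Laguerre polynomials\<close>

definition laguerre_coeff :: "real \<Rightarrow> nat \<Rightarrow> nat \<Rightarrow> real" where
  "laguerre_coeff a k i = (-1) ^ i * ((real k + a) gchoose (k - i)) / fact i"

lemma gen_laguerre_eq_sum_coeff: "gen_laguerre a k x = (\<Sum>i\<le>k. laguerre_coeff a k i * x ^ i)"
  unfolding gen_laguerre_def laguerre_coeff_def by (simp add: field_simps)

lemma gen_laguerre_0 [simp]: "gen_laguerre a 0 x = 1"
  by (simp add: gen_laguerre_def)

lemma laguerre_coeff_Suc_param:
  assumes "i \<le> k"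
  shows "laguerre_coeff (a + 1) (Suc k) i = laguerre_coeff (a + 1) k i + laguerre_coeff a (Suc k) i"
proof -
  have "Suc k - i = Suc (k - i)" and "real (Suc k) + (a + 1) = (real (Suc k) + a) + 1"
    and "real k + (a + 1) = real (Suc k) + a"
    using assms by auto
  then show ?thesis
    unfolding laguerre_coeff_def by (simp only: gbinomial_Suc_Suc) (simp add: field_simps)
qed

lemma gen_laguerre_Suc_param:
  "gen_laguerre (a + 1) (Suc k) x = gen_laguerre (a + 1) k x + gen_laguerre a (Suc k) x"
proof -
  have "laguerre_coeff (a + 1) (Suc k) (Suc k) = laguerre_coeff a (Suc k) (Suc k)"
    by (simp add: laguerre_coeff_def)
  then show ?thesis
    unfolding gen_laguerre_eq_sum_coeff
    by (simp add: laguerre_coeff_Suc_param distrib_right sum.distrib)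
qed

lemma gen_laguerre_param_plus_one_eq_sum: "gen_laguerre (a + 1) k x = (\<Sum>j\<le>k. gen_laguerre a j x)"
  by (induction k) (simp_all add: gen_laguerre_Suc_param)

lemma laguerre_coeff_Suc_deriv:
  "real (Suc i) * laguerre_coeff a (Suc k) (Suc i) = - laguerre_coeff (a + 1) k i"
proof -
  have param: "real k + (a + 1) = real (Suc k) + a" by simp
  have fact: "fact (Suc i) = real (Suc i) * (fact i :: real)" by simp
  show ?thesis
    unfolding laguerre_coeff_def diff_Suc_Suc param fact by (simp del: of_nat_Suc)
qed

lemma has_real_derivative_gen_laguerre:
  "(gen_laguerre a (Suc k) has_real_derivative - gen_laguerre (a + 1) k x) (at x)"
proof -
  have "(gen_laguerre a (Suc k) has_real_derivative
          (\<Sum>i\<le>Suc k. laguerre_coeff a (Suc k) i * (real i * x ^ (i - Suc 0)))) (at x)"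
    unfolding gen_laguerre_eq_sum_coeff [abs_def]
    by (intro DERIV_sum DERIV_cmult DERIV_pow)
  also have "(\<Sum>i\<le>Suc k. laguerre_coeff a (Suc k) i * (real i * x ^ (i - Suc 0)))
           = (\<Sum>i\<le>k. real (Suc i) * laguerre_coeff a (Suc k) (Suc i) * x ^ i)"
    by (subst sum.atMost_Suc_shift) (simp add: ac_simps)
  also have "\<dots> = - gen_laguerre (a + 1) k x"
    by (simp only: laguerre_coeff_Suc_deriv) (simp add: gen_laguerre_eq_sum_coeff sum_negf)
  finally show ?thesis .
qed

lemma has_real_derivative_gen_laguerre_sum:
  "(gen_laguerre a k has_real_derivative - (\<Sum>j<k. gen_laguerre a j x)) (at x)"
proof (cases k)
  case 0
  have "gen_laguerre a 0 = (\<lambda>_. 1)"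
    by auto
  then show ?thesis
    using 0 by simp
next
  case (Suc m)
  then show ?thesis
    using has_real_derivative_gen_laguerre[of a m x]
    by (simp add: gen_laguerre_param_plus_one_eq_sum lessThan_Suc_atMost)
qed

lemma laguerre_coeff_mult_pochhammer:
  assumes "i \<le> k"
  shows "laguerre_coeff a k i * pochhammer (a + 1) i
           = (-1) ^ i * (pochhammer (a + 1) k / fact k) * real (k choose i)"
proof -
  have "real k + a - real (k - i) + 1 = a + 1 + real i"
    using assms by (simp add: of_nat_diff)
  then have binom: "(real k + a) gchoose (k - i) = pochhammer (a + 1 + real i) (k - i) / fact (k - i)"
    by (simp only: gbinomial_pochhammer')
  have "pochhammer (a + 1) k = pochhammer (a + 1) i * pochhammer (a + 1 + real i) (k - i)"
    using pochhammer_product'[of "a + 1" i "k - i"] assms by simp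
  moreover have "real (k choose i) = fact k / (fact i * fact (k - i))"
    using binomial_fact[OF assms] by simp
  ultimately show ?thesis
    unfolding laguerre_coeff_def binom by (simp add: field_simps)
qed

lemma sum_laguerre_coeff_pochhammer_power:
  "(\<Sum>i\<le>k. laguerre_coeff a k i * pochhammer (a + 1) i * y ^ i)
     = pochhammer (a + 1) k / fact k * (1 - y) ^ k"
proof -
  have "(\<Sum>i\<le>k. laguerre_coeff a k i * pochhammer (a + 1) i * y ^ i)
      = (\<Sum>i\<le>k. pochhammer (a + 1) k / fact k * (real (k choose i) * (- y) ^ i * 1 ^ (k - i)))"
  proof (intro sum.cong refl)
    fix i assume "i \<in> {..k}"
    then have "laguerre_coeff a k i * pochhammer (a + 1) i * y ^ i
        = (-1) ^ i * (pochhammer (a + 1) k / fact k) * real (k choose i) * y ^ i"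
      by (simp only: laguerre_coeff_mult_pochhammer atMost_iff)
    then show "laguerre_coeff a k i * pochhammer (a + 1) i * y ^ i
        = pochhammer (a + 1) k / fact k * (real (k choose i) * (- y) ^ i * 1 ^ (k - i))"
      by (simp add: power_minus[of y])
  qed
  also have "\<dots> = pochhammer (a + 1) k / fact k * (\<Sum>i\<le>k. real (k choose i) * (- y) ^ i * 1 ^ (k - i))"
    by (simp only: sum_distrib_left)
  also have "\<dots> = pochhammer (a + 1) k / fact k * (1 - y) ^ k"
    using binomial_ring[of "- y" 1 k] by simp
  finally show ?thesis .
qed

lemma sum_laguerre_coeff_pochhammer_eq_gbinomial:
  "(\<Sum>i\<le>k. laguerre_coeff a k i * pochhammer (a + 1 + real j) i) = (real k - 1 - real j) gchoose k"
proof -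
  have "(- (a + 1 + real j)) gchoose i = (-1) ^ i * pochhammer (a + 1 + real j) i / fact i" for i
    using gbinomial_pochhammer[of "- (a + 1 + real j)" i] by (simp only: minus_minus)
  then have "(\<Sum>i\<le>k. laguerre_coeff a k i * pochhammer (a + 1 + real j) i)
      = (\<Sum>i\<le>k. ((- (a + 1 + real j)) gchoose i) * ((real k + a) gchoose (k - i)))"
    by (simp add: laguerre_coeff_def mult_ac)
  also have "\<dots> = (- (a + 1 + real j) + (real k + a)) gchoose k"
    using gbinomial_Vandermonde[of "- (a + 1 + real j)" "real k + a" k] by (simp add: atLeast0AtMost)
  also have "- (a + 1 + real j) + (real k + a) = real k - 1 - real j" by simp
  finally show ?thesis .
qed

lemma sum_sum_laguerre_coeff_pochhammer:
  "(\<Sum>i\<le>k. \<Sum>j\<le>k. laguerre_coeff a k i * laguerre_coeff a k j * pochhammer (a + 1) (i + j))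
     = pochhammer (a + 1) k / fact k"
proof -
  \<comment> \<open>orthogonality of L_k^(a) to x^j for j < k\<close>
  have vanish: "(real k - 1 - real j) gchoose k = 0" if "j < k" for j
  proof -
    have "real k - 1 - real j = real (k - 1 - j)" using that by auto
    also have "real (k - 1 - j) gchoose k = real ((k - 1 - j) choose k)"
      by (simp add: binomial_gbinomial)
    finally show ?thesis using that by simp
  qed
  have top: "(-1 :: real) gchoose k = (-1) ^ k"
    using gbinomial_minus[of "1::real" k] binomial_gbinomial[of k k, where 'a = real] by simp
  have "(\<Sum>i\<le>k. \<Sum>j\<le>k. laguerre_coeff a k i * laguerre_coeff a k j * pochhammer (a + 1) (i + j))
      = (\<Sum>j\<le>k. laguerre_coeff a k j * pochhammer (a + 1) j *
                  (\<Sum>i\<le>k. laguerre_coeff a k i * pochhammer (a + 1 + real j) i))"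
  proof -
    have split: "pochhammer (a + 1) (i + j) = pochhammer (a + 1) j * pochhammer (a + 1 + real j) i"
      for i j
      using pochhammer_product'[of "a + 1" j i] by (simp add: add.commute)
    have "(\<Sum>i\<le>k. \<Sum>j\<le>k. laguerre_coeff a k i * laguerre_coeff a k j * pochhammer (a + 1) (i + j))
        = (\<Sum>j\<le>k. \<Sum>i\<le>k. laguerre_coeff a k j * pochhammer (a + 1) j *
                  (laguerre_coeff a k i * pochhammer (a + 1 + real j) i))"
      by (subst sum.swap) (simp only: split mult_ac)
    then show ?thesis
      by (simp only: sum_distrib_left)
  qed
  also have "\<dots> = (\<Sum>j\<le>k. laguerre_coeff a k j * pochhammer (a + 1) j * ((real k - 1 - real j) gchoose k))"
    by (simp only: sum_laguerre_coeff_pochhammer_eq_gbinomial)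
  also have "\<dots> = laguerre_coeff a k k * pochhammer (a + 1) k * (-1) ^ k"
  proof -
    have "{..k} = insert k {..<k}" by auto
    then show ?thesis by (simp add: vanish top)
  qed
  also have "\<dots> = pochhammer (a + 1) k / fact k"
    by (simp add: laguerre_coeff_def minus_one_mult_self)
  finally show ?thesis .
qed

lemma Suc_mult_pochhammer_div_fact_mono:
  fixes a :: real
  assumes "a \<ge> - 1 / 2" and "j \<le> k"
  shows "(real j + 1) * (pochhammer (a + 1) j / fact j) \<le> (real k + 1) * (pochhammer (a + 1) k / fact k)"
proof (rule lift_Suc_mono_le[OF _ assms(2)])
  fix m
  define q where "q = pochhammer (a + 1) m / fact m"
  have "q > 0"
    unfolding q_def using assms(1) by (simp add: pochhammer_pos)
  have "(real m + 1) * (real m + 1) \<le> (real m + 2) * (a + 1 + real m)"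
  proof -
    have "(real m + 1) * (real m + 1) \<le> (real m + 2) * (real m + 1 / 2)"
      by (simp add: algebra_simps)
    also have "\<dots> \<le> (real m + 2) * (a + 1 + real m)"
      using assms(1) by (intro mult_left_mono) auto
    finally show ?thesis .
  qed
  then have "q * ((real m + 1) * (real m + 1)) / (real m + 1) \<le> q * ((real m + 2) * (a + 1 + real m)) / (real m + 1)"
    using \<open>q > 0\<close> by (intro divide_right_mono mult_left_mono) auto
  then have "(real m + 1) * q \<le> q * ((real m + 2) * (a + 1 + real m)) / (real m + 1)"
    by (simp add: mult.commute)
  also have "\<dots> = (real m + 2) * (q * ((a + 1 + real m) / (real m + 1)))"
    by simp
  finally have "(real m + 1) * q \<le> (real m + 2) * (q * ((a + 1 + real m) / (real m + 1)))" .
  then show "(real m + 1) * (pochhammer (a + 1) m / fact m)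
      \<le> (real (Suc m) + 1) * (pochhammer (a + 1) (Suc m) / fact (Suc m))"
    by (simp add: q_def pochhammer_Suc field_simps)
qed

section \<open>Moments of the weights\<close>

lemma pow_le_fact_mult_exp:
  fixes x :: real
  assumes "0 \<le> x"
  shows "x ^ N \<le> fact N * exp x"
proof -
  have exp: "(\<lambda>n. x ^ n /\<^sub>R fact n) sums exp x"
    by (rule exp_converges)
  have "(\<Sum>n\<in>{N}. x ^ n /\<^sub>R fact n) \<le> (\<Sum>n. x ^ n /\<^sub>R fact n)"
    by (rule sum_le_suminf) (use exp assms in \<open>auto simp: sums_iff\<close>)
  then have "x ^ N / fact N \<le> exp x"
    using exp by (simp add: sums_iff divide_inverse_commute)
  then show ?thesis
    by (simp add: field_simps)
qed

lemma pow_mult_exp_neg_pow_le: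
  fixes \<rho> :: real
  assumes "\<rho> > 0" and "p \<ge> 2"
  obtains M where "\<And>s. s \<ge> 0 \<Longrightarrow> s ^ N * exp (- \<rho> * s ^ p) \<le> M * exp (- s)"
proof
  define T where "T = max 1 (2 / \<rho>)"
  fix s :: real
  assume s: "s \<ge> 0"
  show "s ^ N * exp (- \<rho> * s ^ p) \<le> (T ^ N * exp T + fact N) * exp (- s)"
  proof (cases "s \<le> T")
    case True
    have "s ^ N * exp (- \<rho> * s ^ p) \<le> T ^ N * 1"
      using True s assms by (intro mult_mono power_mono) auto
    also have "\<dots> = T ^ N * exp T * exp (- T)"
      by (simp add: exp_minus)
    also have "\<dots> \<le> T ^ N * exp T * exp (- s)"
      using True by (simp add: T_def)
    also have "\<dots> \<le> (T ^ N * exp T + fact N) * exp (- s)"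
      by (simp add: distrib_right)
    finally show ?thesis .
  next
    case False
    then have "2 / \<rho> < s" and "1 \<le> s"
      by (auto simp: T_def)
    then have "2 \<le> \<rho> * s"
      using assms by (simp add: field_simps)
    have "2 * s \<le> (\<rho> * s) * s"
      using \<open>2 \<le> \<rho> * s\<close> s by (intro mult_right_mono) auto
    also have "\<dots> = \<rho> * s ^ 2"
      by (simp add: power2_eq_square)
    also have "\<dots> \<le> \<rho> * s ^ p"
      using \<open>1 \<le> s\<close> assms by (intro mult_left_mono power_increasing) auto
    finally have "exp (- \<rho> * s ^ p) \<le> exp (- 2 * s)"
      by simp
    then have "s ^ N * exp (- \<rho> * s ^ p) \<le> fact N * exp s * exp (- 2 * s)"
      using s by (intro mult_mono pow_le_fact_mult_exp) auto
    also have "\<dots> = fact N * exp (- s)"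
      by (simp add: mult.assoc flip: exp_add)
    also have "\<dots> \<le> (T ^ N * exp T + fact N) * exp (- s)"
      using \<open>1 \<le> s\<close> by (intro mult_right_mono) (auto simp: T_def)
    finally show ?thesis .
  qed
qed

lemma integrable_exp_neg_abs: "(\<lambda>t::real. exp (- \<bar>t\<bar>)) integrable_on UNIV"
proof -
  define h where "h t = (if t \<in> {0..} then exp (- t) else 0)" for t :: real
  have "((\<lambda>t. exp (- 1 * t)) has_integral exp (- 1 * 0) / 1) {0::real..}"
    by (rule has_integral_exp_minus_to_infinity) simp
  then have "h integrable_on UNIV"
    unfolding h_def integrable_restrict_UNIV by auto
  then have h: "h absolutely_integrable_on UNIV"
    by (rule nonnegative_absolutely_integrable_1) (simp add: h_def)
  then have "(\<lambda>t. h (- t)) absolutely_integrable_on UNIV"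
    using has_absolute_integral_reflect_real[of UNIV UNIV h "integral UNIV h"] by simp
  then have "(\<lambda>t. h t + h (- t)) integrable_on UNIV"
    using h by (intro integrable_add) (auto simp: absolutely_integrable_on_def)
  then show ?thesis
  proof (rule integrable_on_all_intervals_UNIV[rotated 2])
    show "(\<lambda>t. exp (- \<bar>t\<bar>)) integrable_on cbox a b" for a b :: real
      by (intro integrable_continuous continuous_intros)
    show "norm (exp (- \<bar>t\<bar>)) \<le> h t + h (- t)" for t
      by (simp add: h_def)
  qed
qed

lemma
  fixes \<rho> :: real
  assumes "\<rho> > 0"
  shows integrable_pow_mult_exp_neg_even_pow:
      "(\<lambda>t. t ^ N * exp (- \<rho> * t ^ (2*n+2))) integrable_on UNIV"
    and tendsto_pow_mult_exp_neg_even_pow: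
      "((\<lambda>t. t ^ N * exp (- \<rho> * t ^ (2*n+2))) \<longlongrightarrow> 0) at_infinity"
proof -
  obtain M where M: "\<And>s. s \<ge> 0 \<Longrightarrow> s ^ N * exp (- \<rho> * s ^ (2*n+2)) \<le> M * exp (- s)"
    using pow_mult_exp_neg_pow_le[OF assms, of "2*n+2"] by auto
  have bound: "norm (t ^ N * exp (- \<rho> * t ^ (2*n+2))) \<le> M * exp (- \<bar>t\<bar>)" for t :: real
  proof -
    have "\<bar>t\<bar> ^ (2*n+2) = t ^ (2*n+2)"
      by (rule power_even_abs) simp
    then show ?thesis
      using M[of "\<bar>t\<bar>"] by (simp add: abs_mult power_abs)
  qed
  show "(\<lambda>t. t ^ N * exp (- \<rho> * t ^ (2*n+2))) integrable_on UNIV"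
  proof (rule integrable_on_all_intervals_UNIV)
    show "(\<lambda>t. t ^ N * exp (- \<rho> * t ^ (2*n+2))) integrable_on cbox a b" for a b :: real
      by (intro integrable_continuous continuous_intros)
    show "(\<lambda>t. M * exp (- \<bar>t\<bar>)) integrable_on UNIV"
      using integrable_cmul[OF integrable_exp_neg_abs, of M] by simp
  qed (rule bound)
  have "filterlim (\<lambda>t::real. norm t) at_top at_infinity"
    by (rule filterlim_at_infinity_imp_norm_at_top[OF filterlim_ident])
  then have "filterlim (\<lambda>t::real. \<bar>t\<bar>) at_top at_infinity"
    by simp
  then have "filterlim (\<lambda>t::real. - \<bar>t\<bar>) at_bot at_infinity"
    by (simp add: filterlim_uminus_at_top)
  then have "((\<lambda>t::real. M * exp (- \<bar>t\<bar>)) \<longlongrightarrow> 0) at_infinity"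
    by (intro tendsto_mult_right_zero filterlim_compose[OF exp_at_bot])
  then show "((\<lambda>t. t ^ N * exp (- \<rho> * t ^ (2*n+2))) \<longlongrightarrow> 0) at_infinity"
    by (rule Lim_null_comparison[OF always_eventually[OF allI[OF bound]]])
qed

lemma integral_UNIV_deriv_eq_0:
  fixes F f :: "real \<Rightarrow> real"
  assumes deriv: "\<And>x. (F has_real_derivative f x) (at x)"
    and int: "f integrable_on UNIV"
    and lim: "(F \<longlongrightarrow> 0) at_infinity"
  shows "integral UNIV f = 0"
proof (rule ccontr)
  define I where "I = integral UNIV f"
  assume "integral UNIV f \<noteq> 0"
  then have e: "\<bar>I\<bar> / 3 > 0"
    by (simp add: I_def)
  have "(f has_integral I) UNIV"
    using int by (simp add: I_def integrable_integral)
  then have "\<forall>e>0. \<exists>B>0. \<forall>a b. ball 0 B \<subseteq> cbox a b \<longrightarrow> norm (integral (cbox a b) f - I) < e"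
    unfolding has_integral_alt' by simp
  then obtain B where "B > 0"
    and B: "\<And>a b. ball 0 B \<subseteq> cbox a b \<Longrightarrow> norm (integral (cbox a b) f - I) < \<bar>I\<bar> / 3"
    using e by blast
  obtain R0 where R0: "\<And>x. R0 \<le> \<bar>x\<bar> \<Longrightarrow> \<bar>F x\<bar> < \<bar>I\<bar> / 3"
    using tendstoD[OF lim e] by (auto simp: eventually_at_infinity)
  define R where "R = max B R0"
  have "ball 0 B \<subseteq> cbox (- R) R"
    by (auto simp: R_def dist_real_def)
  then have "\<bar>integral {- R..R} f - I\<bar> < \<bar>I\<bar> / 3"
    using B by (simp add: cbox_interval)
  moreover have "(f has_integral F R - F (- R)) {- R..R}"
  proof (rule fundamental_theorem_of_calculus)
    show "- R \<le> R"
      using \<open>B > 0\<close> by (simp add: R_def)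
    show "(F has_vector_derivative f x) (at x within {- R..R})" for x
      using deriv[of x]
      by (simp add: has_real_derivative_iff_has_vector_derivative has_vector_derivative_at_within)
  qed
  then have "integral {- R..R} f = F R - F (- R)"
    by (rule integral_unique)
  moreover have "\<bar>F R\<bar> < \<bar>I\<bar> / 3" and "\<bar>F (- R)\<bar> < \<bar>I\<bar> / 3"
    by (rule R0; simp add: R_def)+
  ultimately show False
    by arith
qed

definition moment :: "nat \<Rightarrow> real \<Rightarrow> nat \<Rightarrow> real" where
  "moment n \<rho> N = integral UNIV (\<lambda>t. t ^ N * exp (- \<rho> * t ^ (2*n+2)))"

lemma has_integral_moment:
  "\<rho> > 0 \<Longrightarrow> ((\<lambda>t. t ^ N * exp (- \<rho> * t ^ (2*n+2))) has_integral moment n \<rho> N) UNIV"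
  unfolding moment_def by (rule integrable_integral[OF integrable_pow_mult_exp_neg_even_pow])

lemma moment_nonneg: "\<rho> > 0 \<Longrightarrow> moment n \<rho> (2*n) \<ge> 0"
  by (rule has_integral_nonneg[OF has_integral_moment]) (auto intro!: zero_le_even_power)

lemma moment_antimono:
  assumes "0 < \<rho>" and "\<rho> \<le> \<rho>'"
  shows "moment n \<rho>' (2*n) \<le> moment n \<rho> (2*n)"
proof (rule has_integral_le[OF has_integral_moment has_integral_moment])
  fix t :: real
  have "t ^ (2*n) \<ge> 0" and "t ^ (2*n+2) \<ge> 0"
    by (rule zero_le_even_power, simp)+
  then show "t ^ (2*n) * exp (- \<rho>' * t ^ (2*n+2)) \<le> t ^ (2*n) * exp (- \<rho> * t ^ (2*n+2))"
    using assms by (intro mult_left_mono) (simp_all add: mult_right_mono)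
qed (use assms in auto)

lemma integral_by_parts_pow_mult_exp_neg_even_pow:
  assumes "\<rho> > 0"
  shows "integral UNIV (\<lambda>t. real (N + 1) * (t ^ N * exp (- \<rho> * t ^ (2*n+2)))
           - \<rho> * (2 * real n + 2) * (t ^ (N + (2*n+2)) * exp (- \<rho> * t ^ (2*n+2)))) = 0"
proof (rule integral_UNIV_deriv_eq_0)
  show "((\<lambda>t. t ^ (N + 1) * exp (- \<rho> * t ^ (2*n+2))) has_real_derivative
          real (N + 1) * (x ^ N * exp (- \<rho> * x ^ (2*n+2)))
          - \<rho> * (2 * real n + 2) * (x ^ (N + (2*n+2)) * exp (- \<rho> * x ^ (2*n+2)))) (at x)" for x
    by (rule derivative_eq_intros refl)+ (simp add: algebra_simps power_add)
  show "(\<lambda>t. real (N + 1) * (t ^ N * exp (- \<rho> * t ^ (2*n+2)))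
           - \<rho> * (2 * real n + 2) * (t ^ (N + (2*n+2)) * exp (- \<rho> * t ^ (2*n+2)))) integrable_on UNIV"
    using assms by (intro integrable_diff integrable_on_mult_right integrable_pow_mult_exp_neg_even_pow)
qed (rule tendsto_pow_mult_exp_neg_even_pow[OF assms])

lemma moment_recurrence:
  assumes "\<rho> > 0"
  shows "\<rho> * (2 * real n + 2) * moment n \<rho> (N + (2*n+2)) = real (N + 1) * moment n \<rho> N"
proof -
  have int: "(\<lambda>t. t ^ K * exp (- \<rho> * t ^ (2*n+2))) integrable_on UNIV" for K
    using assms by (rule integrable_pow_mult_exp_neg_even_pow)
  show ?thesis
    using integral_by_parts_pow_mult_exp_neg_even_pow[OF assms, of N n]
    unfolding integral_diff[OF integrable_on_mult_right[OF int] integrable_on_mult_right[OF int]]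
      integral_mult_right moment_def
    by linarith
qed

definition laguerre_alpha :: "nat \<Rightarrow> real" where
  "laguerre_alpha n = - 1 / (2 * real n + 2)"

lemma laguerre_alpha_ge: "laguerre_alpha n \<ge> - 1 / 2"
  by (simp add: laguerre_alpha_def field_simps)

lemma moment_closed_form:
  assumes "\<rho> > 0"
  shows "moment n \<rho> (2*n + (2*n+2)*m) = moment n \<rho> (2*n) * pochhammer (laguerre_alpha n + 1) m / \<rho> ^ m"
proof (induction m)
  case 0
  then show ?case by simp
next
  case (Suc m)
  define N where "N = 2*n + (2*n+2)*m"
  have "real (N + 1) = (2 * real n + 2) * (laguerre_alpha n + 1 + real m)"
    by (simp add: N_def laguerre_alpha_def field_simps)
  then have "\<rho> * moment n \<rho> (N + (2*n+2)) = moment n \<rho> N * (laguerre_alpha n + 1 + real m)"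
    using moment_recurrence[OF assms, of n N] by (simp add: mult_ac)
  moreover have "2*n + (2*n+2) * Suc m = N + (2*n+2)"
    by (simp add: N_def)
  ultimately have "moment n \<rho> (2*n + (2*n+2) * Suc m) = moment n \<rho> N * (laguerre_alpha n + 1 + real m) / \<rho>"
    using assms by (simp add: field_simps)
  also have "\<dots> = moment n \<rho> (2*n) * pochhammer (laguerre_alpha n + 1) (Suc m) / \<rho> ^ Suc m"
    using Suc.IH by (simp add: N_def pochhammer_Suc mult_ac)
  finally show ?case .
qed

lemma has_integral_moment_polynomial:
  fixes p :: "'a \<Rightarrow> real" and e :: "'a \<Rightarrow> nat"
  assumes "\<rho> > 0" and "finite S"
  shows "((\<lambda>t. t ^ (2*n) * exp (- \<rho> * t ^ (2*n+2)) * (\<Sum>s\<in>S. p s * (t ^ (2*n+2) / (real n + 1)) ^ e s))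
          has_integral moment n \<rho> (2*n) *
            (\<Sum>s\<in>S. p s * pochhammer (laguerre_alpha n + 1) (e s) / (\<rho> * (real n + 1)) ^ e s)) UNIV"
proof -
  have "((\<lambda>t. p s / (real n + 1) ^ e s * (t ^ (2*n + (2*n+2) * e s) * exp (- \<rho> * t ^ (2*n+2))))
          has_integral p s / (real n + 1) ^ e s * moment n \<rho> (2*n + (2*n+2) * e s)) UNIV" for s
    by (intro has_integral_mult_right has_integral_moment assms)
  then have "((\<lambda>t. \<Sum>s\<in>S. p s / (real n + 1) ^ e s * (t ^ (2*n + (2*n+2) * e s) * exp (- \<rho> * t ^ (2*n+2))))
          has_integral (\<Sum>s\<in>S. p s / (real n + 1) ^ e s * moment n \<rho> (2*n + (2*n+2) * e s))) UNIV"
    by (intro has_integral_sum assms(2))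
  moreover have "t ^ (2*n) * exp (- \<rho> * t ^ (2*n+2)) * (\<Sum>s\<in>S. p s * (t ^ (2*n+2) / (real n + 1)) ^ e s)
      = (\<Sum>s\<in>S. p s / (real n + 1) ^ e s * (t ^ (2*n + (2*n+2) * e s) * exp (- \<rho> * t ^ (2*n+2))))" for t
    unfolding sum_distrib_left
  proof (rule sum.cong[OF refl])
    fix s
    show "t ^ (2*n) * exp (- \<rho> * t ^ (2*n+2)) * (p s * (t ^ (2*n+2) / (real n + 1)) ^ e s)
        = p s / (real n + 1) ^ e s * (t ^ (2*n + (2*n+2) * e s) * exp (- \<rho> * t ^ (2*n+2)))"
      by (simp only: power_divide power_add power_mult) (simp add: field_simps)
  qed
  moreover have "(\<Sum>s\<in>S. p s / (real n + 1) ^ e s * moment n \<rho> (2*n + (2*n+2) * e s))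
      = moment n \<rho> (2*n) * (\<Sum>s\<in>S. p s * pochhammer (laguerre_alpha n + 1) (e s) / (\<rho> * (real n + 1)) ^ e s)"
    unfolding sum_distrib_left
  proof (rule sum.cong[OF refl])
    fix s
    show "p s / (real n + 1) ^ e s * moment n \<rho> (2*n + (2*n+2) * e s)
        = moment n \<rho> (2*n) * (p s * pochhammer (laguerre_alpha n + 1) (e s) / (\<rho> * (real n + 1)) ^ e s)"
      unfolding moment_closed_form[OF assms(1)] power_mult_distrib using assms(1) by (simp add: field_simps)
  qed
  ultimately show ?thesis
    by simp
qed

section \<open>The unnormalized functions\<close>

lemma v_unnorm_eq:
  "v_unnorm n k t = exp (- (t ^ (2*n+2)) / (2 * real n + 2)) *
     gen_laguerre (laguerre_alpha n) k (t ^ (2*n+2) / (real n + 1))"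
  unfolding v_unnorm_def laguerre_alpha_def ..

lemma has_real_derivative_v_unnorm:
  "(v_unnorm n k has_real_derivative
      - (t ^ (2*n+1)) * (v_unnorm n k t + 2 * (\<Sum>j<k. v_unnorm n j t))) (at t)"
proof -
  define E where "E t = exp (- (t ^ (2*n+2)) / (2 * real n + 2))" for t :: real
  define X where "X t = t ^ (2*n+2) / (real n + 1)" for t :: real
  define L where "L j x = gen_laguerre (laguerre_alpha n) j x" for j x
  have v: "v_unnorm n j = (\<lambda>t. E t * L j (X t))" for j
    by (simp add: fun_eq_iff v_unnorm_eq E_def X_def L_def)
  have "((\<lambda>t. - (t ^ (2*n+2)) / (2 * real n + 2)) has_real_derivative
      - (real (2*n+2) * t ^ (2*n+1)) / (2 * real n + 2)) (at t)"
    using DERIV_cdivide[OF DERIV_minus[OF DERIV_pow[of "2*n+2" t]], of "2 * real n + 2"] by simp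
  moreover have "- (real (2*n+2) * t ^ (2*n+1)) / (2 * real n + 2) = - (t ^ (2*n+1))"
    by (simp add: field_simps)
  ultimately have "(E has_real_derivative E t * - (t ^ (2*n+1))) (at t)"
    unfolding E_def by (intro DERIV_chain2[OF DERIV_exp]) simp
  moreover have "(X has_real_derivative real (2*n+2) * t ^ (2*n+1) / (real n + 1)) (at t)"
    unfolding X_def using DERIV_cdivide[OF DERIV_pow[of "2*n+2" t], of "real n + 1"] by simp
  then have "((\<lambda>t. L k (X t)) has_real_derivative
      - (\<Sum>j<k. L j (X t)) * (real (2*n+2) * t ^ (2*n+1) / (real n + 1))) (at t)"
    unfolding L_def by (rule DERIV_chain2[OF has_real_derivative_gen_laguerre_sum])
  ultimately have deriv: "((\<lambda>t. E t * L k (X t)) has_real_derivative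
      E t * - (t ^ (2*n+1)) * L k (X t)
      + - (\<Sum>j<k. L j (X t)) * (real (2*n+2) * t ^ (2*n+1) / (real n + 1)) * E t) (at t)"
    by (rule DERIV_mult)
  have two: "real (2*n+2) * t ^ (2*n+1) / (real n + 1) = 2 * t ^ (2*n+1)"
    by (simp add: field_simps)
  have collect: "E t * - (t ^ (2*n+1)) * L k (X t) + - (\<Sum>j<k. L j (X t)) * (2 * t ^ (2*n+1)) * E t
      = - (t ^ (2*n+1)) * (E t * L k (X t) + 2 * (\<Sum>j<k. E t * L j (X t)))"
    by (simp only: sum_distrib_left[symmetric]) (simp add: algebra_simps)
  show ?thesis
    unfolding v using deriv[unfolded two collect] .
qed

(* The squared norm Gamma(k + alpha + 1) / k! of L_k^(alpha), divided by Gamma(alpha + 1). *)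
definition laguerre_sq_norm :: "nat \<Rightarrow> nat \<Rightarrow> real" where
  "laguerre_sq_norm n k = pochhammer (laguerre_alpha n + 1) k / fact k"

lemma laguerre_sq_norm_pos: "laguerre_sq_norm n k > 0"
  unfolding laguerre_sq_norm_def using laguerre_alpha_ge[of n] by (simp add: pochhammer_pos)

lemma Suc_mult_laguerre_sq_norm_mono:
  "j \<le> k \<Longrightarrow> (real j + 1) * laguerre_sq_norm n j \<le> (real k + 1) * laguerre_sq_norm n k"
  unfolding laguerre_sq_norm_def by (rule Suc_mult_pochhammer_div_fact_mono[OF laguerre_alpha_ge])

lemma laguerre_sq_norm_le:
  assumes "j \<le> k"
  shows "laguerre_sq_norm n j \<le> (real (k - j) + 1) * laguerre_sq_norm n k"
proof -
  have "real k + 1 \<le> (real j + 1) * (real (k - j) + 1)"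
  proof -
    have "real (k - j) = real k - real j"
      using assms by (rule of_nat_diff)
    moreover have "0 \<le> real j * (real k - real j)"
      using assms by simp
    ultimately show ?thesis
      by (simp add: algebra_simps)
  qed
  have "(real j + 1) * laguerre_sq_norm n j \<le> (real k + 1) * laguerre_sq_norm n k"
    by (rule Suc_mult_laguerre_sq_norm_mono[OF assms])
  also have "\<dots> \<le> ((real j + 1) * (real (k - j) + 1)) * laguerre_sq_norm n k"
    using \<open>real k + 1 \<le> (real j + 1) * (real (k - j) + 1)\<close> laguerre_sq_norm_pos[of n k]
    by (intro mult_right_mono) simp_all
  also have "\<dots> = (real j + 1) * ((real (k - j) + 1) * laguerre_sq_norm n k)"
    by (rule mult.assoc)
  finally show ?thesis
    by (rule mult_left_le_imp_le) simp
qed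

lemma has_integral_weighted_sq_v_unnorm:
  "((\<lambda>t. (t ^ n * v_unnorm n k t)\<^sup>2) has_integral moment n (1 / (real n + 1)) (2*n) * laguerre_sq_norm n k) UNIV"
proof -
  define c where "c = laguerre_coeff (laguerre_alpha n) k"
  define X where "X t = t ^ (2*n+2) / (real n + 1)" for t :: real
  have "(t ^ n * v_unnorm n k t)\<^sup>2 = t ^ (2*n) * exp (- (1 / (real n + 1)) * t ^ (2*n+2)) *
          (\<Sum>(i, j)\<in>{..k} \<times> {..k}. c i * c j * X t ^ (i + j))" for t
  proof -
    have halves: "- x / (2 * c) + - x / (2 * c) = - (1 / c) * x" if "c > 0" for c x :: real
      using that by (simp add: field_simps)
    have "exp (- (t ^ (2*n+2)) / (2 * real n + 2)) ^ 2 = exp (- (1 / (real n + 1)) * t ^ (2*n+2))"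
      using halves[of "real n + 1" "t ^ (2*n+2)"] by (simp add: power2_eq_square flip: exp_add)
    moreover have "gen_laguerre (laguerre_alpha n) k (X t) ^ 2 = (\<Sum>(i, j)\<in>{..k} \<times> {..k}. c i * c j * X t ^ (i + j))"
      by (simp add: gen_laguerre_eq_sum_coeff c_def power2_eq_square sum_product
          sum.cartesian_product power_add mult_ac)
    ultimately show ?thesis
      by (simp add: v_unnorm_eq X_def power_mult_distrib power_mult[symmetric] mult_ac)
  qed
  moreover have "((\<lambda>t. t ^ (2*n) * exp (- (1 / (real n + 1)) * t ^ (2*n+2)) *
          (\<Sum>(i, j)\<in>{..k} \<times> {..k}. c i * c j * X t ^ (i + j))) has_integral
      moment n (1 / (real n + 1)) (2*n) *
        (\<Sum>(i, j)\<in>{..k} \<times> {..k}. c i * c j * pochhammer (laguerre_alpha n + 1) (i + j))) UNIV"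
    using has_integral_moment_polynomial[of "1 / (real n + 1)" "{..k} \<times> {..k}" n
        "\<lambda>(i, j). c i * c j" "\<lambda>(i, j). i + j"]
    by (simp add: X_def case_prod_unfold)
  ultimately show ?thesis
    by (simp add: c_def laguerre_sq_norm_def sum_sum_laguerre_coeff_pochhammer flip: sum.cartesian_product)
qed

(* The weight exp (t^(2n+2)/(6n+6)) leaves exp (-t^(2n+2)/(3n+3)), so the i-th power of X
   picks up the factor 3^i and the Laguerre sum collapses to (1 - 3)^k. *)
lemma has_integral_v_unnorm_laplace:
  "((\<lambda>t. t ^ (2*n) * v_unnorm n k t * exp (t ^ (2*n+2) / (3 * (2 * real n + 2)))) has_integral
      moment n (1 / (3 * (real n + 1))) (2*n) * laguerre_sq_norm n k * (-2) ^ k) UNIV"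
proof -
  define c where "c = laguerre_coeff (laguerre_alpha n) k"
  define X where "X t = t ^ (2*n+2) / (real n + 1)" for t :: real
  have thirds: "- x / (2 * c) + x / (3 * (2 * c)) = - (1 / (3 * c)) * x" if "c > 0" for c x :: real
    using that by (simp add: field_simps)
  have pointwise: "t ^ (2*n) * v_unnorm n k t * exp (t ^ (2*n+2) / (3 * (2 * real n + 2)))
      = t ^ (2*n) * exp (- (1 / (3 * (real n + 1))) * t ^ (2*n+2)) * (\<Sum>i\<le>k. c i * X t ^ i)" for t
  proof -
    have "t ^ (2*n) * v_unnorm n k t * exp (t ^ (2*n+2) / (3 * (2 * real n + 2)))
        = t ^ (2*n) * (exp (- (t ^ (2*n+2)) / (2 * real n + 2)) * exp (t ^ (2*n+2) / (3 * (2 * real n + 2))))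
          * gen_laguerre (laguerre_alpha n) k (X t)"
      by (simp add: v_unnorm_eq X_def mult_ac)
    also have "exp (- (t ^ (2*n+2)) / (2 * real n + 2)) * exp (t ^ (2*n+2) / (3 * (2 * real n + 2)))
        = exp (- (1 / (3 * (real n + 1))) * t ^ (2*n+2))"
      using thirds[of "real n + 1" "t ^ (2*n+2)"] by (simp flip: exp_add)
    also have "gen_laguerre (laguerre_alpha n) k (X t) = (\<Sum>i\<le>k. c i * X t ^ i)"
      by (simp only: gen_laguerre_eq_sum_coeff c_def)
    finally show ?thesis .
  qed
  have pos: "1 / (3 * (real n + 1)) > 0" and third: "1 / (3 * (real n + 1)) * (real n + 1) = 1 / 3"
    by simp_all
  have "((\<lambda>t. t ^ (2*n) * exp (- (1 / (3 * (real n + 1))) * t ^ (2*n+2)) * (\<Sum>i\<le>k. c i * X t ^ i))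
      has_integral moment n (1 / (3 * (real n + 1))) (2*n) *
        (\<Sum>i\<le>k. c i * pochhammer (laguerre_alpha n + 1) i / (1 / 3) ^ i)) UNIV"
    using has_integral_moment_polynomial[OF pos finite_atMost, where n = n and p = c and e = "\<lambda>i. i", unfolded third]
    unfolding X_def .
  moreover have "(\<Sum>i\<le>k. c i * pochhammer (laguerre_alpha n + 1) i / (1 / 3) ^ i)
      = (\<Sum>i\<le>k. c i * pochhammer (laguerre_alpha n + 1) i * 3 ^ i)"
    by (simp add: power_one_over)
  moreover have "(\<Sum>i\<le>k. c i * pochhammer (laguerre_alpha n + 1) i * 3 ^ i) = laguerre_sq_norm n k * (-2) ^ k"
    unfolding c_def sum_laguerre_coeff_pochhammer_power laguerre_sq_norm_def by simp
  ultimately show ?thesis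
    unfolding pointwise mult.assoc[of "moment n (1 / (3 * (real n + 1))) (2*n)"] by simp
qed

lemma sum_Suc_mult_power_le:
  fixes r :: real
  assumes "0 \<le> r" and "r < 1"
  shows "(\<Sum>i<m. real (Suc i) * r ^ i) \<le> 1 / (1 - r)\<^sup>2"
proof -
  have sums: "(\<lambda>i. real (Suc i) * r ^ i) sums (1 / (1 - r)\<^sup>2)"
    using assms by (intro geometric_deriv_sums) simp
  have "(\<Sum>i<m. real (Suc i) * r ^ i) \<le> (\<Sum>i. real (Suc i) * r ^ i)"
    by (rule sum_le_suminf) (use sums assms in \<open>auto simp: sums_iff\<close>)
  then show ?thesis
    using sums by (simp add: sums_iff)
qed

lemma sum_weighted_powers_le:
  fixes C :: real
  assumes "C > 1"
  shows "(\<Sum>j<k. (real (k - j) + 1) * C ^ (j + 1)) \<le> 2 * C ^ (k + 1) / (1 - 1 / C)\<^sup>2"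
proof -
  define r where "r = 1 / C"
  have r: "0 \<le> r" "r < 1"
    using assms by (auto simp: r_def)
  have "(\<Sum>j<k. (real (k - j) + 1) * C ^ (j + 1)) = (\<Sum>i<k. (real i + 2) * C ^ (k - i))"
    by (rule sum.reindex_bij_witness[of _ "\<lambda>i. k - Suc i" "\<lambda>j. k - Suc j"]) auto
  also have "\<dots> \<le> (\<Sum>i<k. 2 * C ^ (k + 1) * (real (Suc i) * r ^ i))"
  proof (rule sum_mono)
    fix i assume "i \<in> {..<k}"
    then have "C ^ (k - i) = C ^ (k + 1) * r ^ (i + 1)"
      using assms by (simp add: r_def power_one_over field_simps flip: power_add)
    also have "\<dots> \<le> C ^ (k + 1) * r ^ i"
      using r assms by (intro mult_left_mono power_decreasing) auto
    finally have "C ^ (k - i) \<le> C ^ (k + 1) * r ^ i" .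
    moreover have "real i + 2 \<le> 2 * real (Suc i)"
      by simp
    ultimately have "(real i + 2) * C ^ (k - i) \<le> (2 * real (Suc i)) * (C ^ (k + 1) * r ^ i)"
      using assms by (intro mult_mono) auto
    then show "(real i + 2) * C ^ (k - i) \<le> 2 * C ^ (k + 1) * (real (Suc i) * r ^ i)"
      by (simp only: mult_ac)
  qed
  also have "\<dots> = 2 * C ^ (k + 1) * (\<Sum>i<k. real (Suc i) * r ^ i)"
    by (simp add: sum_distrib_left)
  also have "\<dots> \<le> 2 * C ^ (k + 1) * (1 / (1 - r)\<^sup>2)"
    using assms by (intro mult_left_mono sum_Suc_mult_power_le r) auto
  finally show ?thesis
    by (simp add: r_def)
qed

lemma abs_pow_mult_exp_neg_even_pow_le:
  fixes t \<epsilon> :: real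
  assumes "0 < \<epsilon>" and "\<epsilon> \<le> 1"
  shows "\<bar>t\<bar> ^ (2*n+1) * exp (- \<epsilon> * t ^ (2*n+2)) \<le> 1 / \<epsilon>\<^sup>2"
proof -
  define s where "s = t ^ (2*n+2)"
  have "s \<ge> 0"
    unfolding s_def by (rule zero_le_even_power) simp
  have "\<bar>t\<bar> ^ (2*n+1) \<le> 1 + s"
  proof (cases "\<bar>t\<bar> \<le> 1")
    case True
    then have "\<bar>t\<bar> ^ (2*n+1) \<le> 1"
      by (intro power_le_one) auto
    then show ?thesis
      using \<open>s \<ge> 0\<close> by simp
  next
    case False
    then have "\<bar>t\<bar> ^ (2*n+1) \<le> \<bar>t\<bar> ^ (2*n+2)"
      by (intro power_increasing) auto
    then show ?thesis
      by (simp add: s_def power_abs power_even_abs)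
  qed
  also have "1 + s \<le> (1 + \<epsilon> * s) / \<epsilon>"
    using assms \<open>s \<ge> 0\<close> by (simp add: field_simps)
  also have "\<dots> \<le> exp (\<epsilon> * s) / \<epsilon>"
    using assms by (intro divide_right_mono) auto
  finally have "\<bar>t\<bar> ^ (2*n+1) * exp (- \<epsilon> * s) \<le> exp (\<epsilon> * s) / \<epsilon> * exp (- \<epsilon> * s)"
    by (rule mult_right_mono) simp
  also have "\<dots> = 1 / \<epsilon>"
    by (simp add: exp_minus field_simps)
  also have "\<dots> \<le> 1 / \<epsilon>\<^sup>2"
    using assms by (simp add: power2_eq_square field_simps)
  finally show ?thesis
    by (simp add: s_def)
qed

lemma unbounded_mult_four_pow:
  fixes a :: "nat \<Rightarrow> real"
  assumes "\<And>k. 1 \<le> (real k + 1) * a k" and "W > 0"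
  shows "\<exists>k. M < W * a k * 4 ^ k"
proof -
  define k where "k = nat \<lceil>M / W\<rceil>"
  have "Suc k \<le> 2 ^ k"
    by (rule Suc_leI[OF less_exp])
  then have "real k + 1 \<le> 2 ^ k"
    by (metis of_nat_Suc add.commute of_nat_le_iff of_nat_numeral of_nat_power)
  then have "(real k + 1) * (real k + 1) \<le> 4 ^ k"
    using power_mono[of "real k + 1" "2 ^ k" 2] by (simp add: power2_eq_square flip: power_mult_distrib)
  also have "\<dots> \<le> (real k + 1) * a k * 4 ^ k"
    using assms(1)[of k] by simp
  finally have "real k + 1 \<le> a k * 4 ^ k"
    by (simp add: mult.assoc)
  have "M / W < real k + 1"
    unfolding k_def by linarith
  then have "M < W * (real k + 1)"
    using assms(2) by (simp add: pos_divide_less_eq mult.commute)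
  also have "\<dots> \<le> W * (a k * 4 ^ k)"
    using \<open>real k + 1 \<le> a k * 4 ^ k\<close> assms(2) by (intro mult_left_mono) simp_all
  finally show ?thesis
    by (auto simp: mult.assoc)
qed

lemma decay_rate_bounds:
  fixes \<delta> :: real
  assumes "0 < \<delta>" and "\<delta> \<le> 1 / 2"
  shows "1 / (3 * (2 * real n + 2)) < (1 - \<delta> ^ (2*n+1)) / (2 * real n + 2)"
    and "(1 - \<delta> ^ (2*n+1)) / (2 * real n + 2) \<le> 1"
proof -
  define d where "d = \<delta> ^ (2*n+1)"
  have "d \<le> \<delta> ^ 1" and "d > 0"
    using assms unfolding d_def by (intro power_decreasing, auto)
  then have "1 / 3 < 1 - d" and "1 - d \<le> 2 * real n + 2"
    using assms(2) by auto
  have "1 / 3 / (2 * real n + 2) < (1 - d) / (2 * real n + 2)"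
    using \<open>1 / 3 < 1 - d\<close> by (rule divide_strict_right_mono) simp
  moreover have "(1 - d) / (2 * real n + 2) \<le> 1"
    using \<open>1 - d \<le> 2 * real n + 2\<close> by (simp add: divide_le_eq_1)
  ultimately show "1 / (3 * (2 * real n + 2)) < (1 - \<delta> ^ (2*n+1)) / (2 * real n + 2)"
    and "(1 - \<delta> ^ (2*n+1)) / (2 * real n + 2) \<le> 1"
    unfolding d_def[symmetric] by simp_all
qed

section \<open>Normalized families\<close>

locale normalized_laguerre_family =
  fixes n :: nat and c :: "nat \<Rightarrow> real" and v :: "nat \<Rightarrow> real \<Rightarrow> real"
  assumes v_def: "\<And>k t. v k t = c k * v_unnorm n k t"
    and c_pos: "\<And>k. c k > 0"
    and c_norm: "\<And>k. ((\<lambda>t. (t ^ n * v k t)\<^sup>2) has_integral 1) UNIV"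
begin

lemma c_sq_mult_norm: "(c k)\<^sup>2 * (moment n (1 / (real n + 1)) (2*n) * laguerre_sq_norm n k) = 1"
proof -
  have eq: "(\<lambda>t. (t ^ n * v k t)\<^sup>2) = (\<lambda>t. (c k)\<^sup>2 * (t ^ n * v_unnorm n k t)\<^sup>2)"
    by (simp add: v_def power_mult_distrib mult_ac)
  have "((\<lambda>t. (c k)\<^sup>2 * (t ^ n * v_unnorm n k t)\<^sup>2) has_integral
      (c k)\<^sup>2 * (moment n (1 / (real n + 1)) (2*n) * laguerre_sq_norm n k)) UNIV"
    by (intro has_integral_mult_right has_integral_weighted_sq_v_unnorm)
  from has_integral_unique[OF this c_norm[of k, unfolded eq]] show ?thesis .
qed

lemma moment_weight_pos: "moment n (1 / (real n + 1)) (2*n) > 0"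
  using c_sq_mult_norm[of 0] moment_nonneg[of "1 / (real n + 1)" n]
  by (cases "moment n (1 / (real n + 1)) (2*n) = 0") (auto simp: laguerre_sq_norm_def)

lemma c_le:
  assumes "j \<le> k"
  shows "c k \<le> (real (k - j) + 1) * c j"
proof -
  define D where "D = real (k - j) + 1"
  define qj qk where "qj = laguerre_sq_norm n j" and "qk = laguerre_sq_norm n k"
  have "qk > 0" and "D \<ge> 1"
    by (simp_all add: qk_def D_def laguerre_sq_norm_pos)
  have "qj \<le> D * qk"
    unfolding qj_def qk_def D_def by (rule laguerre_sq_norm_le[OF assms])
  also have "\<dots> \<le> D\<^sup>2 * qk"
    using power_increasing[of 1 2 D] \<open>D \<ge> 1\<close> \<open>qk > 0\<close> by (intro mult_right_mono) simp_all
  finally have "qj \<le> D\<^sup>2 * qk" .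
  have "(c k)\<^sup>2 * qk = (c j)\<^sup>2 * qj"
  proof -
    define W where "W = moment n (1 / (real n + 1)) (2*n)"
    have "W * ((c k)\<^sup>2 * qk) = W * ((c j)\<^sup>2 * qj)"
      using c_sq_mult_norm[of k] c_sq_mult_norm[of j] unfolding W_def qj_def qk_def
      by (metis mult.left_commute)
    moreover have "W \<noteq> 0"
      using c_sq_mult_norm[of k] unfolding W_def by auto
    ultimately show ?thesis
      by simp
  qed
  also have "\<dots> \<le> (c j)\<^sup>2 * (D\<^sup>2 * qk)"
    using \<open>qj \<le> D\<^sup>2 * qk\<close> by (rule mult_left_mono) simp
  also have "\<dots> = (D * c j)\<^sup>2 * qk"
    by (simp add: power_mult_distrib)
  finally have "(c k)\<^sup>2 \<le> (D * c j)\<^sup>2"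
    using \<open>qk > 0\<close> by simp
  moreover have "0 \<le> D * c j"
    using c_pos[of j] \<open>D \<ge> 1\<close> by simp
  ultimately have "c k \<le> D * c j"
    by (rule power2_le_imp_le)
  then show ?thesis
    by (simp only: D_def)
qed

lemma deriv_v: "deriv (v k) t = - (t ^ (2*n+1)) * (v k t + 2 * (\<Sum>j<k. c k / c j * v j t))"
proof -
  have "v k = (\<lambda>t. c k * v_unnorm n k t)"
    by (simp add: fun_eq_iff v_def)
  then have "deriv (v k) t = c k * (- (t ^ (2*n+1)) * (v_unnorm n k t + 2 * (\<Sum>j<k. v_unnorm n j t)))"
    by (simp add: DERIV_imp_deriv[OF DERIV_cmult[OF has_real_derivative_v_unnorm]])
  moreover have "c k / c j * v j t = c k * v_unnorm n j t" for j
    using c_pos[of j] by (simp add: v_def)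
  ultimately show ?thesis
    by (simp add: v_def sum_distrib_left algebra_simps)
qed

lemma abs_deriv_v_le:
  "\<bar>deriv (v k) t\<bar> \<le> \<bar>t\<bar> ^ (2*n+1) * (\<bar>v k t\<bar> + 2 * (\<Sum>j<k. (real (k - j) + 1) * \<bar>v j t\<bar>))"
proof -
  have "\<bar>v k t + 2 * (\<Sum>j<k. c k / c j * v j t)\<bar> \<le> \<bar>v k t\<bar> + 2 * \<bar>\<Sum>j<k. c k / c j * v j t\<bar>"
    using abs_triangle_ineq[of "v k t" "2 * (\<Sum>j<k. c k / c j * v j t)"] by (simp add: abs_mult)
  also have "\<dots> \<le> \<bar>v k t\<bar> + 2 * (\<Sum>j<k. \<bar>c k / c j * v j t\<bar>)"
    using sum_abs[of "\<lambda>j. c k / c j * v j t" "{..<k}"] by simp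
  also have "(\<Sum>j<k. \<bar>c k / c j * v j t\<bar>) \<le> (\<Sum>j<k. (real (k - j) + 1) * \<bar>v j t\<bar>)"
  proof (rule sum_mono)
    fix j assume "j \<in> {..<k}"
    then have "c k / c j \<le> real (k - j) + 1"
      using c_le[of j k] c_pos[of j] by (simp add: divide_le_eq)
    moreover have "c k / c j > 0"
      using c_pos[of j] c_pos[of k] by simp
    ultimately show "\<bar>c k / c j * v j t\<bar> \<le> (real (k - j) + 1) * \<bar>v j t\<bar>"
      by (simp only: abs_mult abs_of_pos) (rule mult_right_mono, simp_all)
  qed
  finally show ?thesis
    unfolding deriv_v abs_mult abs_minus power_abs by (intro mult_left_mono) auto
qed

lemma abs_laplace_integrand_le:
  assumes bound: "\<And>k t. \<bar>v k t\<bar> \<le> C0 ^ (k + 1) * exp (- B * t ^ (2*n+2))"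
  shows "\<bar>t ^ (2*n) * v k t * exp (t ^ (2*n+2) / (3 * (2 * real n + 2)))\<bar>
           \<le> C0 ^ (k + 1) * (t ^ (2*n) * exp (- (B - 1 / (3 * (2 * real n + 2))) * t ^ (2*n+2)))"
proof -
  have "t ^ (2*n) \<ge> 0"
    by (rule zero_le_even_power) simp
  then have "\<bar>t ^ (2*n) * v k t * exp (t ^ (2*n+2) / (3 * (2 * real n + 2)))\<bar>
      = t ^ (2*n) * \<bar>v k t\<bar> * exp (t ^ (2*n+2) / (3 * (2 * real n + 2)))"
    by (simp add: abs_mult)
  also have "\<dots> \<le> t ^ (2*n) * (C0 ^ (k + 1) * exp (- B * t ^ (2*n+2))) * exp (t ^ (2*n+2) / (3 * (2 * real n + 2)))"
    using \<open>t ^ (2*n) \<ge> 0\<close> bound by (intro mult_right_mono mult_left_mono) auto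
  also have "\<dots> = C0 ^ (k + 1) * (t ^ (2*n) * (exp (- B * t ^ (2*n+2)) * exp (t ^ (2*n+2) / (3 * (2 * real n + 2)))))"
    by (simp only: mult_ac)
  also have "exp (- B * t ^ (2*n+2)) * exp (t ^ (2*n+2) / (3 * (2 * real n + 2)))
      = exp (- (B - 1 / (3 * (2 * real n + 2))) * t ^ (2*n+2))"
    by (simp add: algebra_simps flip: exp_add)
  finally show ?thesis .
qed

lemma laplace_bound:
  assumes "1 / (3 * (2 * real n + 2)) < B"
    and bound: "\<And>k t. \<bar>v k t\<bar> \<le> C0 ^ (k + 1) * exp (- B * t ^ (2*n+2))"
  shows "c k * moment n (1 / (3 * (real n + 1))) (2*n) * laguerre_sq_norm n k * 2 ^ k
           \<le> C0 ^ (k + 1) * moment n (B - 1 / (3 * (2 * real n + 2))) (2*n)"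
proof -
  define \<rho> where "\<rho> = B - 1 / (3 * (2 * real n + 2))"
  define I where "I = c k * (moment n (1 / (3 * (real n + 1))) (2*n) * laguerre_sq_norm n k * (-2) ^ k)"
  define f where "f t = t ^ (2*n) * v k t * exp (t ^ (2*n+2) / (3 * (2 * real n + 2)))" for t
  define g where "g t = C0 ^ (k + 1) * (t ^ (2*n) * exp (- \<rho> * t ^ (2*n+2)))" for t
  have "f = (\<lambda>t. c k * (t ^ (2*n) * v_unnorm n k t * exp (t ^ (2*n+2) / (3 * (2 * real n + 2)))))"
    by (simp add: fun_eq_iff f_def v_def mult_ac)
  then have f: "(f has_integral I) UNIV"
    unfolding I_def using has_integral_v_unnorm_laplace by (simp add: has_integral_mult_right)
  have "\<rho> > 0"
    using assms(1) by (simp add: \<rho>_def)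
  then have g: "(g has_integral C0 ^ (k + 1) * moment n \<rho> (2*n)) UNIV"
    unfolding g_def by (intro has_integral_mult_right has_integral_moment)
  have fg: "\<bar>f t\<bar> \<le> g t" for t
    unfolding f_def g_def \<rho>_def by (rule abs_laplace_integrand_le[OF bound])
  have "I \<le> C0 ^ (k + 1) * moment n \<rho> (2*n)"
    by (rule has_integral_le[OF f g]) (use fg in \<open>simp add: abs_le_iff\<close>)
  moreover have "- I \<le> C0 ^ (k + 1) * moment n \<rho> (2*n)"
    by (rule has_integral_le[OF has_integral_neg[OF f] g]) (use fg in \<open>simp add: abs_le_iff\<close>)
  moreover have "\<bar>I\<bar> = c k * moment n (1 / (3 * (real n + 1))) (2*n) * laguerre_sq_norm n k * 2 ^ k"
    using c_pos[of k] laguerre_sq_norm_pos[of n k] moment_nonneg[of "1 / (3 * (real n + 1))" n]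
    by (simp add: I_def abs_mult power_abs)
  ultimately show ?thesis
    unfolding \<rho>_def by linarith
qed

lemma sq_norm_four_pow_bounded:
  assumes B: "1 / (3 * (2 * real n + 2)) < B" and "0 < C0" and "C0 \<le> 1"
    and bound: "\<And>k t. \<bar>v k t\<bar> \<le> C0 ^ (k + 1) * exp (- B * t ^ (2*n+2))"
  shows "(moment n (1 / (3 * (real n + 1))) (2*n))\<^sup>2 * laguerre_sq_norm n k * 4 ^ k
           \<le> (moment n (B - 1 / (3 * (2 * real n + 2))) (2*n))\<^sup>2 * moment n (1 / (real n + 1)) (2*n)"
proof -
  define W1 W2 W3 where "W1 = moment n (1 / (real n + 1)) (2*n)"
    and "W2 = moment n (1 / (3 * (real n + 1))) (2*n)"
    and "W3 = moment n (B - 1 / (3 * (2 * real n + 2))) (2*n)"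
  define x where "x = c k * W2 * laguerre_sq_norm n k * 2 ^ k"
  have "W1 > 0"
    unfolding W1_def by (rule moment_weight_pos)
  moreover have "W1 \<le> W2"
    unfolding W1_def W2_def by (rule moment_antimono) (simp_all add: field_simps)
  ultimately have "W2 > 0"
    by linarith
  then have "x \<ge> 0"
    using c_pos[of k] laguerre_sq_norm_pos[of n k] by (simp add: x_def)
  have "W3 \<ge> 0"
    unfolding W3_def using B by (intro moment_nonneg) simp
  have "x \<le> C0 ^ (k + 1) * W3"
    unfolding x_def W2_def W3_def by (rule laplace_bound[OF B bound])
  also have "\<dots> \<le> W3"
    using assms(2,3) \<open>W3 \<ge> 0\<close> by (intro mult_left_le_one_le power_le_one) auto
  finally have "x\<^sup>2 * W1 \<le> W3\<^sup>2 * W1"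
    using \<open>x \<ge> 0\<close> \<open>W1 > 0\<close> by (intro mult_right_mono power_mono) auto
  moreover have "x\<^sup>2 * W1 = ((c k)\<^sup>2 * (W1 * laguerre_sq_norm n k)) * (W2\<^sup>2 * laguerre_sq_norm n k * (2 ^ k * 2 ^ k))"
    unfolding x_def power2_eq_square by (simp only: mult_ac)
  moreover have "(2::real) ^ k * 2 ^ k = 4 ^ k"
    by (simp flip: power_mult_distrib)
  ultimately show ?thesis
    using c_sq_mult_norm[of k] by (simp add: W1_def W2_def W3_def)
qed

lemma growth_base_gt_one:
  assumes B: "1 / (3 * (2 * real n + 2)) < B" and "C0 > 0"
    and bound: "\<And>k t. \<bar>v k t\<bar> \<le> C0 ^ (k + 1) * exp (- B * t ^ (2*n+2))"
  shows "C0 > 1"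
proof (rule ccontr)
  assume "\<not> C0 > 1"
  define W1 W2 W3 where "W1 = moment n (1 / (real n + 1)) (2*n)"
    and "W2 = moment n (1 / (3 * (real n + 1))) (2*n)"
    and "W3 = moment n (B - 1 / (3 * (2 * real n + 2))) (2*n)"
  have "W1 \<le> W2"
    unfolding W1_def W2_def by (rule moment_antimono) (simp_all add: field_simps)
  then have "W2 > 0"
    using moment_weight_pos unfolding W1_def by linarith
  moreover have "1 \<le> (real k + 1) * laguerre_sq_norm n k" for k
    using Suc_mult_laguerre_sq_norm_mono[of 0 k n] by (simp add: laguerre_sq_norm_def)
  ultimately obtain k where "W3\<^sup>2 * W1 < W2\<^sup>2 * laguerre_sq_norm n k * 4 ^ k"
    using unbounded_mult_four_pow[of "laguerre_sq_norm n" "W2\<^sup>2" "W3\<^sup>2 * W1"] by auto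
  moreover have "W2\<^sup>2 * laguerre_sq_norm n k * 4 ^ k \<le> W3\<^sup>2 * W1"
    unfolding W1_def W2_def W3_def using \<open>\<not> C0 > 1\<close>
    by (intro sq_norm_four_pow_bounded[OF B \<open>C0 > 0\<close> _ bound]) simp
  ultimately show False
    by simp
qed

lemma abs_deriv_v_le_growth:
  assumes "C0 > 1"
    and bound: "\<And>k t. \<bar>v k t\<bar> \<le> C0 ^ (k + 1) * exp (- B * t ^ (2*n+2))"
  shows "\<bar>deriv (v k) t\<bar> \<le> C0 * (1 + 4 / (1 - 1 / C0)\<^sup>2) * C0 ^ k * (\<bar>t\<bar> ^ (2*n+1) * exp (- B * t ^ (2*n+2)))"
proof -
  define E where "E = exp (- B * t ^ (2*n+2))"
  have "\<bar>v k t\<bar> + 2 * (\<Sum>j<k. (real (k - j) + 1) * \<bar>v j t\<bar>)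
      \<le> C0 ^ (k + 1) * E + 2 * (\<Sum>j<k. (real (k - j) + 1) * (C0 ^ (j + 1) * E))"
    using bound unfolding E_def by (intro add_mono mult_left_mono sum_mono) auto
  also have "\<dots> = (C0 ^ (k + 1) + 2 * (\<Sum>j<k. (real (k - j) + 1) * C0 ^ (j + 1))) * E"
    by (simp only: sum_distrib_right distrib_right mult.assoc)
  also have "\<dots> \<le> (C0 ^ (k + 1) + 2 * (2 * C0 ^ (k + 1) / (1 - 1 / C0)\<^sup>2)) * E"
    using sum_weighted_powers_le[OF assms(1), of k] by (intro mult_right_mono) (simp_all add: E_def)
  also have "\<dots> = C0 * (1 + 4 / (1 - 1 / C0)\<^sup>2) * C0 ^ k * E"
    by (simp add: algebra_simps)
  finally have "\<bar>t\<bar> ^ (2*n+1) * (\<bar>v k t\<bar> + 2 * (\<Sum>j<k. (real (k - j) + 1) * \<bar>v j t\<bar>))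
      \<le> \<bar>t\<bar> ^ (2*n+1) * (C0 * (1 + 4 / (1 - 1 / C0)\<^sup>2) * C0 ^ k * E)"
    by (intro mult_left_mono) simp_all
  with abs_deriv_v_le[of k t] show ?thesis
    by (simp add: E_def mult_ac)
qed

lemma abs_deriv_v_le_exp:
  assumes "C0 > 1" and "B \<le> 1" and "0 < B'" and "B' < B"
    and bound: "\<And>k t. \<bar>v k t\<bar> \<le> C0 ^ (k + 1) * exp (- B * t ^ (2*n+2))"
  shows "\<bar>deriv (v k) t\<bar> \<le> (C0 * (1 + 4 / (1 - 1 / C0)\<^sup>2) / (B - B')\<^sup>2) * C0 ^ k * exp (- B' * t ^ (2*n+2))"
proof -
  define K where "K = C0 * (1 + 4 / (1 - 1 / C0)\<^sup>2)"
  have "K \<ge> 0"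
    unfolding K_def using assms(1) by simp
  have "\<bar>deriv (v k) t\<bar>
      \<le> K * C0 ^ k * (\<bar>t\<bar> ^ (2*n+1) * exp (- (B - B') * t ^ (2*n+2))) * exp (- B' * t ^ (2*n+2))"
    using abs_deriv_v_le_growth[OF assms(1) bound, of k t]
    by (simp add: K_def mult.assoc flip: exp_add) (simp add: algebra_simps)
  also have "\<dots> \<le> K * C0 ^ k * (1 / (B - B')\<^sup>2) * exp (- B' * t ^ (2*n+2))"
    using assms(1-4) \<open>K \<ge> 0\<close>
    by (intro mult_right_mono mult_left_mono abs_pow_mult_exp_neg_even_pow_le) auto
  finally show ?thesis
    by (simp add: K_def)
qed

end

theorem proposition5p5:
  fixes n :: nat and c :: "nat \<Rightarrow> real" and v :: "nat \<Rightarrow> real \<Rightarrow> real"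
    and \<delta> B C0 :: real
  assumes v_def: "\<And>k t. v k t = c k * v_unnorm n k t"
    and c_pos: "\<And>k. c k > 0"
    and c_norm: "\<And>k. ((\<lambda>t. (t ^ n * v k t)\<^sup>2) has_integral 1) UNIV"
    and delta: "0 < \<delta>" "\<delta> \<le> 1/2"
    and B_def: "B = (1 - \<delta> ^ (2*n+1)) / (2 * real n + 2)"
    and C0_pos: "C0 > 0"
    and C0_bound: "\<And>k t. \<bar>v k t\<bar> \<le> C0 ^ (k+1) * exp (- B * t ^ (2*n+2))"
  shows "\<exists>K>0. \<forall>B'. 0 < B' \<and> B' < B \<longrightarrow>
           (\<forall>k t. \<bar>deriv (v k) t\<bar> \<le> (K / (B - B')\<^sup>2) * C0 ^ k * exp (- B' * t ^ (2*n+2)))"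
proof -
  interpret normalized_laguerre_family n c v
    using v_def c_pos c_norm by unfold_locales
  have "1 / (3 * (2 * real n + 2)) < B" and "B \<le> 1"
    unfolding B_def by (rule decay_rate_bounds[OF delta])+
  then have "C0 > 1"
    using C0_pos C0_bound by (intro growth_base_gt_one)
  then have "C0 * (1 + 4 / (1 - 1 / C0)\<^sup>2) > 0"
    by (intro mult_pos_pos add_pos_nonneg) simp_all
  then show ?thesis
    using abs_deriv_v_le_exp[OF \<open>C0 > 1\<close> \<open>B \<le> 1\<close> _ _ C0_bound] by blast
qed

end
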